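(* Let $G$ be an equimatchable graph and let $k$ be an integer with $1<k\leq\nu(G)$. Then $I(G)^{[k]}:I(G)^{[k-1]}=I(G)^{[k]}$.
   Context: A finite simple graph is equimatchable if every maximal (by inclusion) matching is a maximum matching. Vertices are identified with variables of $S=K[x_1,\ldots,x_n]$ ($K$ a field), edges with degree-2 monomials. $I(G)^{[k]}$ is the ideal generated by all products $e_1\cdots e_k$ over $k$-matchings of $G$; $I(G)^{[1]}=I(G)$ is the edge ideal. $\nu(G)$ is the matching number. *)

theory Defs
  imports "HOL-Library.Poly_Mapping"
begin

text \<open>The ring S = K[x_v : v \<in> V] is the subset polys_in V.\<close>

definition Var :: "'v \<Rightarrow> ('v \<Rightarrow>\<^sub>0 nat) \<Rightarrow>\<^sub>0 'k::field" where
  "Var v = Poly_Mapping.single (Poly_Mapping.single v 1) 1"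

definition polys_in :: "'v set \<Rightarrow> (('v \<Rightarrow>\<^sub>0 nat) \<Rightarrow>\<^sub>0 'k::field) set" where
  "polys_in V = {p :: ('v \<Rightarrow>\<^sub>0 nat) \<Rightarrow>\<^sub>0 'k. \<forall>m\<in>Poly_Mapping.keys p. Poly_Mapping.keys m \<subseteq> V}"

definition ideal_gen_in :: "'v set \<Rightarrow> (('v \<Rightarrow>\<^sub>0 nat) \<Rightarrow>\<^sub>0 'k::field) set
    \<Rightarrow> (('v \<Rightarrow>\<^sub>0 nat) \<Rightarrow>\<^sub>0 'k) set" where
  "ideal_gen_in V A = {p. \<exists>F r. finite F \<and> F \<subseteq> A \<and> (\<forall>a\<in>F. r a \<in> polys_in V)
                              \<and> p = (\<Sum>a\<in>F. r a * a)}"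

definition colon_in :: "'v set \<Rightarrow> (('v \<Rightarrow>\<^sub>0 nat) \<Rightarrow>\<^sub>0 'k::field) set
    \<Rightarrow> (('v \<Rightarrow>\<^sub>0 nat) \<Rightarrow>\<^sub>0 'k) set \<Rightarrow> (('v \<Rightarrow>\<^sub>0 nat) \<Rightarrow>\<^sub>0 'k) set" where
  "colon_in V I J = {f \<in> polys_in V. \<forall>g\<in>J. f * g \<in> I}"

definition simple_graph :: "'v set \<Rightarrow> 'v set set \<Rightarrow> bool" where
  "simple_graph V E \<longleftrightarrow> finite V \<and> E \<subseteq> {e. e \<subseteq> V \<and> card e = 2}"

definition matching :: "'v set set \<Rightarrow> 'v set set \<Rightarrow> bool" where
  "matching E M \<longleftrightarrow> M \<subseteq> E \<and> (\<forall>e1\<in>M. \<forall>e2\<in>M. e1 \<noteq> e2 \<longrightarrow> e1 \<inter> e2 = {})"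

definition matching_number :: "'v set set \<Rightarrow> nat" where
  "matching_number E = Max (card ` {M. matching E M})"

definition maximal_matching :: "'v set set \<Rightarrow> 'v set set \<Rightarrow> bool" where
  "maximal_matching E M \<longleftrightarrow> matching E M \<and> (\<forall>M'. matching E M' \<and> M \<subseteq> M' \<longrightarrow> M' = M)"

definition maximum_matching :: "'v set set \<Rightarrow> 'v set set \<Rightarrow> bool" where
  "maximum_matching E M \<longleftrightarrow> matching E M \<and> (\<forall>M'. matching E M' \<longrightarrow> card M' \<le> card M)"

definition equimatchable :: "'v set set \<Rightarrow> bool" where
  "equimatchable E \<longleftrightarrow> (\<forall>M. maximal_matching E M \<longrightarrow> maximum_matching E M)"

definition edge_mono :: "'v set \<Rightarrow> ('v \<Rightarrow>\<^sub>0 nat) \<Rightarrow>\<^sub>0 'k::field" where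
  "edge_mono e = (\<Prod>v\<in>e. Var v)"

definition sq_power :: "'v set \<Rightarrow> 'v set set \<Rightarrow> nat \<Rightarrow> (('v \<Rightarrow>\<^sub>0 nat) \<Rightarrow>\<^sub>0 'k::field) set" where
  "sq_power V E k = ideal_gen_in V {(\<Prod>e\<in>M. edge_mono e) | M. matching E M \<and> card M = k}"

end

theory Submission
  imports Defs
begin

text \<open>
Since I(G)^[k] is a squarefree monomial ideal, f lies in it iff every monomial x of f is
divisible by the product of the edges of some k-matching, i.e. the support of x contains the
vertices of a k-matching. If f is in the colon ideal and x is a monomial of f, then x times the
product of any (k-1)-matching M' lies in I(G)^[k], so the support of x together with the
vertices of M' contains a k-matching. The combinatorial heart is the converse statement for
equimatchable graphs: if a vertex set S contains no k-matching, some (k-1)-matching M' can be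
added to S without creating one. To find M', take a largest matching N inside S and extend it
to a matching M, which is maximum by equimatchability. Let X be the edges of M meeting S; each
has at most one vertex outside S. If |X| \<ge> k-1, fill N up with edges of X; every new edge
contributes at most one new vertex, so a matching inside the enlarged set has at most |N| plus
(k-1-|N|) edges. Otherwise fill X up with further edges of M; the remaining edges of M avoid
the enlarged set, so a k-matching there together with them would beat the maximum matching M.
\<close>

section \<open>Matchings\<close>

lemma simple_graph_finite_edges: "simple_graph V E \<Longrightarrow> finite E"
  unfolding simple_graph_def by (auto intro: finite_subset[of E "Pow V"])

lemma simple_graph_edgeD: "simple_graph V E \<Longrightarrow> e \<in> E \<Longrightarrow> finite e \<and> card e = 2 \<and> e \<subseteq> V"
  unfolding simple_graph_def by (auto intro: finite_subset)

lemma matching_subset: "matching E M \<Longrightarrow> M' \<subseteq> M \<Longrightarrow> matching E M'"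
  unfolding matching_def by blast

lemma matching_Un:
  "matching E A \<Longrightarrow> matching E B \<Longrightarrow> (\<And>a b. a \<in> A \<Longrightarrow> b \<in> B \<Longrightarrow> a \<inter> b = {})
    \<Longrightarrow> matching E (A \<union> B)"
  unfolding matching_def by (metis Int_commute Un_iff Un_subset_iff)

lemma matching_finite: "simple_graph V E \<Longrightarrow> matching E M \<Longrightarrow> finite M"
  unfolding matching_def by (blast dest: simple_graph_finite_edges intro: finite_subset)

lemma matching_vertices: "simple_graph V E \<Longrightarrow> matching E M \<Longrightarrow> finite (\<Union>M) \<and> \<Union>M \<subseteq> V"
  using matching_finite[of V E M] simple_graph_edgeD[of V E] unfolding matching_def by blast

lemma finite_matchings: "simple_graph V E \<Longrightarrow> finite {M. matching E M}"
  by (rule finite_subset[of _ "Pow E"]) (auto simp: matching_def dest: simple_graph_finite_edges)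

lemma card_le_matching_number: "simple_graph V E \<Longrightarrow> matching E M \<Longrightarrow> card M \<le> matching_number E"
  unfolding matching_number_def using finite_matchings by (intro Max_ge) auto

lemma matching_number_attained:
  assumes "simple_graph V E"
  obtains M where "matching E M" "card M = matching_number E"
proof -
  have "matching E {}" by (simp add: matching_def)
  hence "matching_number E \<in> card ` {M. matching E M}"
    unfolding matching_number_def using finite_matchings[OF assms] by (intro Max_in) auto
  thus ?thesis using that by auto
qed

lemma ex_max_card_matching:
  assumes sg: "simple_graph V E" and "matching E M\<^sub>0" "P M\<^sub>0"
  obtains M where "matching E M" "P M" "\<And>M'. matching E M' \<Longrightarrow> P M' \<Longrightarrow> card M' \<le> card M"
proof -
  have "\<exists>M. (matching E M \<and> P M) \<and> (\<forall>M'. matching E M' \<and> P M' \<longrightarrow> card M' \<le> card M)"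
    by (rule ex_has_greatest_nat[where k = M\<^sub>0 and b = "Suc (matching_number E)"])
      (use assms card_le_matching_number[OF sg] in \<open>auto simp: less_Suc_eq_le\<close>)
  thus ?thesis using that by blast
qed

lemma equimatchable_extends_to_maximum:
  assumes sg: "simple_graph V E" and eq: "equimatchable E" and N: "matching E N"
  obtains M where "matching E M" "N \<subseteq> M" "card M = matching_number E"
proof -
  obtain M where M: "matching E M" "N \<subseteq> M"
    and Mmax: "\<And>M'. matching E M' \<Longrightarrow> N \<subseteq> M' \<Longrightarrow> card M' \<le> card M"
    using ex_max_card_matching[OF sg N, of "\<lambda>M. N \<subseteq> M"] by blast
  have "maximal_matching E M"
    unfolding maximal_matching_def
  proof (intro conjI allI impI)
    fix M' assume "matching E M' \<and> M \<subseteq> M'"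
    thus "M' = M"
      using Mmax[of M'] M(2) matching_finite[OF sg] by (metis card_seteq order_trans)
  qed fact
  hence "maximum_matching E M" using eq unfolding equimatchable_def by blast
  moreover obtain M\<^sub>0 where "matching E M\<^sub>0" "card M\<^sub>0 = matching_number E"
    using matching_number_attained[OF sg] .
  ultimately have "card M = matching_number E"
    using card_le_matching_number[OF sg M(1)] unfolding maximum_matching_def by force
  thus ?thesis using that M by blast
qed

definition supports_matching :: "'v set set \<Rightarrow> nat \<Rightarrow> 'v set \<Rightarrow> bool" where
  "supports_matching E k S \<longleftrightarrow> (\<exists>P. matching E P \<and> card P = k \<and> \<Union>P \<subseteq> S)"

lemma card_matching_le_by_transversal:
  assumes sg: "simple_graph V E"
    and inside: "\<And>N. matching E N \<Longrightarrow> \<Union>N \<subseteq> S \<Longrightarrow> card N \<le> n"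
    and P: "matching E P" and W: "finite W"
    and hits: "\<And>e. e \<in> P \<Longrightarrow> \<not> e \<subseteq> S \<Longrightarrow> e \<inter> W \<noteq> {}"
  shows "card P \<le> n + card W"
proof -
  define P\<^sub>S where "P\<^sub>S = {e\<in>P. e \<subseteq> S}"
  define P\<^sub>W where "P\<^sub>W = {e\<in>P. \<not> e \<subseteq> S}"
  have "P = P\<^sub>S \<union> P\<^sub>W" "P\<^sub>S \<inter> P\<^sub>W = {}" unfolding P\<^sub>S_def P\<^sub>W_def by auto
  hence "card P = card P\<^sub>S + card P\<^sub>W"
    using matching_finite[OF sg P] by (metis card_Un_disjoint finite_Un)
  moreover have "card P\<^sub>S \<le> n"
    using inside[of P\<^sub>S] matching_subset[OF P, of P\<^sub>S] unfolding P\<^sub>S_def by auto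
  moreover have "card P\<^sub>W \<le> card W"
  proof -
    define pick where "pick e = (SOME w. w \<in> e \<inter> W)" for e
    have pick: "pick e \<in> e \<inter> W" if "e \<in> P\<^sub>W" for e
    proof -
      have "\<exists>w. w \<in> e \<inter> W" using hits that unfolding P\<^sub>W_def by blast
      thus ?thesis unfolding pick_def by (rule someI_ex)
    qed
    have "inj_on pick P\<^sub>W"
    proof (rule inj_onI)
      fix a b assume ab: "a \<in> P\<^sub>W" "b \<in> P\<^sub>W" "pick a = pick b"
      hence "a \<inter> b \<noteq> {}" using pick[of a] pick[of b] by auto
      thus "a = b" using ab(1,2) P unfolding matching_def P\<^sub>W_def by blast
    qed
    moreover have "pick ` P\<^sub>W \<subseteq> W" using pick by blast
    ultimately show ?thesis using W by (rule card_inj_on_le)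
  qed
  ultimately show ?thesis by linarith
qed

lemma card_matching_le_add_pendant_edges:
  assumes sg: "simple_graph V E"
    and inside: "\<And>N. matching E N \<Longrightarrow> \<Union>N \<subseteq> S \<Longrightarrow> card N \<le> n"
    and Y: "Y \<subseteq> E" "\<And>e. e \<in> Y \<Longrightarrow> card (e - S) \<le> 1"
    and P: "matching E P" "\<Union>P \<subseteq> S \<union> \<Union>Y"
  shows "card P \<le> n + card Y"
proof -
  define W where "W = (\<Union>e\<in>Y. e - S)"
  have finY: "finite Y" using Y(1) simple_graph_finite_edges[OF sg] finite_subset by blast
  have finW: "finite W"
    unfolding W_def using finY Y(1) by (auto dest: simple_graph_edgeD[OF sg])
  have "card W \<le> (\<Sum>e\<in>Y. card (e - S))" unfolding W_def using finY by (rule card_UN_le)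
  also have "\<dots> \<le> card Y" using sum_mono[of Y "\<lambda>e. card (e - S)" "\<lambda>_. 1"] Y(2) by simp
  finally have "card W \<le> card Y" .
  moreover have "card P \<le> n + card W"
  proof (rule card_matching_le_by_transversal[OF sg inside P(1) finW])
    fix e assume "e \<in> P" "\<not> e \<subseteq> S"
    then obtain w where "w \<in> e" "w \<notin> S" by blast
    hence "w \<in> W" using P(2) \<open>e \<in> P\<close> unfolding W_def by blast
    thus "e \<inter> W \<noteq> {}" using \<open>w \<in> e\<close> by blast
  qed
  ultimately show ?thesis by linarith
qed

lemma card_matching_le_in_maximum_matching:
  assumes sg: "simple_graph V E"
    and M: "matching E M" "card M = matching_number E" "M' \<subseteq> M"
    and avoid: "\<And>e. e \<in> M - M' \<Longrightarrow> e \<inter> S = {}"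
    and P: "matching E P" "\<Union>P \<subseteq> S \<union> \<Union>M'"
  shows "card P \<le> card M'"
proof -
  define R where "R = M - M'"
  have finM: "finite M" using matching_finite[OF sg M(1)] .
  have disj: "e \<inter> r = {}" if e: "e \<in> P" and r: "r \<in> R" for e r
  proof -
    have "r \<inter> e' = {}" if "e' \<in> M'" for e'
    proof -
      have "r \<in> M" "e' \<in> M" "r \<noteq> e'" using r that M(3) unfolding R_def by auto
      thus ?thesis using M(1) unfolding matching_def by blast
    qed
    hence "r \<inter> \<Union>M' = {}" by blast
    moreover have "r \<inter> S = {}" using avoid r unfolding R_def by blast
    moreover have "e \<subseteq> S \<union> \<Union>M'" using P(2) e by blast
    ultimately show ?thesis by blast
  qed
  have "matching E R" unfolding R_def by (rule matching_subset[OF M(1)]) blast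
  with P(1) have "matching E (P \<union> R)" using disj by (rule matching_Un)
  hence "card (P \<union> R) \<le> card M" using card_le_matching_number[OF sg] M(2) by simp
  moreover have "P \<inter> R = {}"
  proof -
    have "e \<noteq> {}" if "e \<in> P" for e
      using that P(1) simple_graph_edgeD[OF sg, of e] unfolding matching_def by auto
    thus ?thesis using disj by blast
  qed
  hence "card (P \<union> R) = card P + card R"
    using matching_finite[OF sg P(1)] finM by (simp add: R_def card_Un_disjoint)
  moreover have "card R = card M - card M'"
    unfolding R_def using M(3) finM by (simp add: card_Diff_subset finite_subset)
  moreover have "card M' \<le> card M" using finM M(3) by (rule card_mono)
  ultimately show ?thesis by linarith
qed

lemma equimatchable_ex_matching_preserving_unsupported:
  assumes sg: "simple_graph V E" and eq: "equimatchable E"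
    and k: "k \<le> matching_number E" and unsupp: "\<not> supports_matching E k S"
  obtains M' where "matching E M'" "card M' = k - 1" "\<not> supports_matching E k (S \<union> \<Union>M')"
proof -
  have "matching E {}" by (simp add: matching_def)
  then obtain N where N: "matching E N" "\<Union>N \<subseteq> S"
    and N_max: "\<And>N'. matching E N' \<Longrightarrow> \<Union>N' \<subseteq> S \<Longrightarrow> card N' \<le> card N"
    using ex_max_card_matching[OF sg, of "{}" "\<lambda>N. \<Union>N \<subseteq> S"] by auto
  have finN: "finite N" using matching_finite[OF sg N(1)] .
  have N_less: "card N < k"
  proof (rule ccontr)
    assume "\<not> card N < k"
    then obtain Q where "Q \<subseteq> N" "card Q = k" by (meson not_less obtain_subset_with_card_n)
    hence "supports_matching E k S"
      using matching_subset[OF N(1)] N(2) unfolding supports_matching_def by blast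
    with unsupp show False ..
  qed
  obtain M where M: "matching E M" "N \<subseteq> M" "card M = matching_number E"
    using equimatchable_extends_to_maximum[OF sg eq N(1)] .
  have finM: "finite M" using matching_finite[OF sg M(1)] .
  have edge: "finite e \<and> card e = 2" if "e \<in> M" for e
    using that M(1) simple_graph_edgeD[OF sg] unfolding matching_def by blast
  define X where "X = {e\<in>M. e \<inter> S \<noteq> {}}"
  have XM: "X \<subseteq> M" unfolding X_def by blast
  have finX: "finite X" using finM XM by (rule finite_subset[rotated])
  have NX: "N \<subseteq> X"
  proof
    fix e assume "e \<in> N"
    moreover from this have "e \<noteq> {}" using M(2) edge[of e] by auto
    ultimately show "e \<in> X" using M(2) N(2) unfolding X_def by blast
  qed
  have pendant: "card (e - S) \<le> 1" if "e \<in> X" for e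
  proof -
    have e: "finite e" "card e = 2" "e \<inter> S \<noteq> {}" using that edge unfolding X_def by auto
    have "card (e \<inter> S) \<ge> 1" using e(1,3) by (simp add: Suc_leI card_gt_0_iff)
    thus ?thesis using e(1,2) by (simp add: card_Diff_subset_Int)
  qed
  show ?thesis
  proof (cases "k - 1 \<le> card X")
    case True
    have "k - 1 - card N \<le> card (X - N)" using True NX finN by (simp add: card_Diff_subset)
    then obtain Y where Y: "Y \<subseteq> X - N" "card Y = k - 1 - card N"
      by (rule obtain_subset_with_card_n)
    have YE: "Y \<subseteq> E" using Y(1) XM M(1) unfolding matching_def by blast
    have "matching E (N \<union> Y)" using M(1,2) Y(1) XM by (auto intro: matching_subset)
    moreover have "card (N \<union> Y) = k - 1"
    proof -
      have "finite Y" "N \<inter> Y = {}" using Y(1) finX finite_subset by auto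
      thus ?thesis using Y(2) finN N_less by (simp add: card_Un_disjoint)
    qed
    moreover have "\<not> supports_matching E k (S \<union> \<Union>(N \<union> Y))"
    proof
      assume "supports_matching E k (S \<union> \<Union>(N \<union> Y))"
      then obtain P where P: "matching E P" "card P = k" "\<Union>P \<subseteq> S \<union> \<Union>Y"
        using N(2) unfolding supports_matching_def by blast
      have "card P \<le> card N + card Y"
        using card_matching_le_add_pendant_edges[OF sg N_max YE _ P(1,3)] pendant Y(1) by blast
      thus False using P(2) Y(2) N_less by linarith
    qed
    ultimately show ?thesis using that by blast
  next
    case False
    have "k - 1 - card X \<le> card (M - X)" using False k M(3) XM finX by (simp add: card_Diff_subset)
    then obtain Y where Y: "Y \<subseteq> M - X" "card Y = k - 1 - card X"
      by (rule obtain_subset_with_card_n)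
    have M'M: "X \<union> Y \<subseteq> M" using XM Y(1) by blast
    have "matching E (X \<union> Y)" using M(1) M'M by (rule matching_subset)
    moreover have card_M': "card (X \<union> Y) = k - 1"
    proof -
      have "finite Y" "X \<inter> Y = {}" using Y(1) finM finite_subset by auto
      thus ?thesis using Y(2) finX False by (simp add: card_Un_disjoint)
    qed
    moreover have "\<not> supports_matching E k (S \<union> \<Union>(X \<union> Y))"
    proof
      assume "supports_matching E k (S \<union> \<Union>(X \<union> Y))"
      then obtain P where P: "matching E P" "card P = k" "\<Union>P \<subseteq> S \<union> \<Union>(X \<union> Y)"
        unfolding supports_matching_def by blast
      have "card P \<le> card (X \<union> Y)"
        by (rule card_matching_le_in_maximum_matching[OF sg M(1,3) M'M _ P(1,3)])
          (auto simp: X_def)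
      thus False using P(2) card_M' N_less by linarith
    qed
    ultimately show ?thesis using that by blast
  qed
qed

section \<open>Monomial ideals\<close>

lemma polys_in_zero: "0 \<in> polys_in V"
  unfolding polys_in_def by simp

lemma polys_in_one: "1 \<in> polys_in V"
  unfolding polys_in_def by simp

lemma polys_in_single: "Poly_Mapping.keys m \<subseteq> V \<Longrightarrow> Poly_Mapping.single m c \<in> polys_in V"
  unfolding polys_in_def by simp

lemma polys_in_add: "p \<in> polys_in V \<Longrightarrow> q \<in> polys_in V \<Longrightarrow> p + q \<in> polys_in V"
  unfolding polys_in_def using keys_add[of p q] by blast

lemma polys_in_mult:
  assumes "p \<in> polys_in V" "q \<in> polys_in V"
  shows "p * q \<in> polys_in V"
  unfolding polys_in_def
proof (intro CollectI ballI)
  fix m assume "m \<in> Poly_Mapping.keys (p * q)"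
  then obtain a b where "a \<in> Poly_Mapping.keys p" "b \<in> Poly_Mapping.keys q" "m = a + b"
    using keys_mult by blast
  thus "Poly_Mapping.keys m \<subseteq> V" using assms keys_add[of a b] unfolding polys_in_def by blast
qed

lemma polys_in_sum: "(\<And>a. a \<in> F \<Longrightarrow> f a \<in> polys_in V) \<Longrightarrow> sum f F \<in> polys_in V"
  by (induction F rule: infinite_finite_induct) (simp_all add: polys_in_zero polys_in_add)

lemma ideal_gen_in_zero: "0 \<in> ideal_gen_in V A"
  unfolding ideal_gen_in_def by (intro CollectI exI[of _ "{}"]) simp

lemma ideal_gen_in_multiple: "a \<in> A \<Longrightarrow> r \<in> polys_in V \<Longrightarrow> r * a \<in> ideal_gen_in V A"
  unfolding ideal_gen_in_def by (intro CollectI exI[of _ "{a}"] exI[of _ "\<lambda>_. r"]) simp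

lemma ideal_gen_in_add:
  assumes p: "p \<in> ideal_gen_in V A" and q: "q \<in> ideal_gen_in V A"
  shows "p + q \<in> ideal_gen_in V A"
proof -
  obtain F r where F: "finite F" "F \<subseteq> A" "\<forall>a\<in>F. r a \<in> polys_in V" "p = (\<Sum>a\<in>F. r a * a)"
    using p unfolding ideal_gen_in_def by blast
  obtain G s where G: "finite G" "G \<subseteq> A" "\<forall>a\<in>G. s a \<in> polys_in V" "q = (\<Sum>a\<in>G. s a * a)"
    using q unfolding ideal_gen_in_def by blast
  define r' where "r' a = (if a \<in> F then r a else 0)" for a
  define s' where "s' a = (if a \<in> G then s a else 0)" for a
  have fin: "finite (F \<union> G)" using F G by simp
  have "p = (\<Sum>a\<in>F \<union> G. r' a * a)" unfolding F(4)
    by (rule sum.mono_neutral_cong_left[OF fin]) (auto simp: r'_def)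
  moreover have "q = (\<Sum>a\<in>F \<union> G. s' a * a)" unfolding G(4)
    by (rule sum.mono_neutral_cong_left[OF fin]) (auto simp: s'_def)
  ultimately have "p + q = (\<Sum>a\<in>F \<union> G. (r' a + s' a) * a)"
    by (simp add: distrib_right sum.distrib)
  moreover have "\<forall>a\<in>F \<union> G. r' a + s' a \<in> polys_in V"
    using F(3) G(3) by (auto simp: r'_def s'_def polys_in_add polys_in_zero)
  ultimately show ?thesis unfolding ideal_gen_in_def using fin F(2) G(2)
    by (intro CollectI exI[of _ "F \<union> G"] exI[of _ "\<lambda>a. r' a + s' a"]) auto
qed

lemma ideal_gen_in_sum:
  "(\<And>a. a \<in> F \<Longrightarrow> f a \<in> ideal_gen_in V A) \<Longrightarrow> sum f F \<in> ideal_gen_in V A"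
  by (induction F rule: infinite_finite_induct) (simp_all add: ideal_gen_in_zero ideal_gen_in_add)

lemma ideal_gen_in_subset_polys_in: "A \<subseteq> polys_in V \<Longrightarrow> ideal_gen_in V A \<subseteq> polys_in V"
  unfolding ideal_gen_in_def by (auto intro!: polys_in_sum polys_in_mult)

lemma ideal_gen_in_mult:
  assumes p: "p \<in> ideal_gen_in V A" and g: "g \<in> polys_in V"
  shows "p * g \<in> ideal_gen_in V A"
proof -
  obtain F r where F: "finite F" "F \<subseteq> A" "\<forall>a\<in>F. r a \<in> polys_in V" "p = (\<Sum>a\<in>F. r a * a)"
    using p unfolding ideal_gen_in_def by blast
  have "p * g = (\<Sum>a\<in>F. (r a * g) * a)"
    unfolding F(4) sum_distrib_right by (simp add: mult.commute mult.left_commute)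
  moreover have "\<forall>a\<in>F. r a * g \<in> polys_in V" using F(3) g by (auto intro: polys_in_mult)
  ultimately show ?thesis using F(1,2) unfolding ideal_gen_in_def
    by (intro CollectI exI[of _ F] exI[of _ "\<lambda>a. r a * g"]) auto
qed

lemma poly_mapping_sum_single_lookup:
  "f = (\<Sum>x\<in>Poly_Mapping.keys f. Poly_Mapping.single x (Poly_Mapping.lookup f x))"
  by (rule poly_mapping_eqI) (simp add: lookup_sum lookup_single when_def in_keys_iff)

lemma lookup_mult_single_one:
  "Poly_Mapping.lookup (f * Poly_Mapping.single m (1::'b::comm_semiring_1)) (x + (m::'a::cancel_comm_monoid_add))
    = Poly_Mapping.lookup f x"
proof -
  have "f * Poly_Mapping.single m 1
      = (\<Sum>y\<in>Poly_Mapping.keys f. Poly_Mapping.single (y + m) (Poly_Mapping.lookup f y))"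
    by (subst poly_mapping_sum_single_lookup[of f]) (simp add: sum_distrib_right mult_single)
  hence "Poly_Mapping.lookup (f * Poly_Mapping.single m 1) (x + m)
      = (\<Sum>y\<in>Poly_Mapping.keys f. if y = x then Poly_Mapping.lookup f y else 0)"
    by (simp add: lookup_sum lookup_single when_def)
  thus ?thesis by (simp add: in_keys_iff)
qed

lemma keys_add_nat: "Poly_Mapping.keys (a + b :: 'a \<Rightarrow>\<^sub>0 nat) = Poly_Mapping.keys a \<union> Poly_Mapping.keys b"
  by (auto simp: in_keys_iff lookup_add)

lemma monomial_ideal_keys_dvd:
  assumes p: "p \<in> ideal_gen_in V {Poly_Mapping.single (h M) (1::'k::field) | M. Q M}"
    and x: "x \<in> Poly_Mapping.keys p"
  shows "\<exists>M d. Q M \<and> x = d + h M"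
proof -
  obtain F r where F: "F \<subseteq> {Poly_Mapping.single (h M) 1 | M. Q M}" "p = (\<Sum>a\<in>F. r a * a)"
    using p unfolding ideal_gen_in_def by blast
  have "\<exists>a\<in>F. x \<in> Poly_Mapping.keys (r a * a)"
  proof (rule ccontr)
    assume "\<not> ?thesis"
    hence "Poly_Mapping.lookup p x = 0" unfolding F(2) by (simp add: lookup_sum in_keys_iff)
    thus False using x by (simp add: in_keys_iff)
  qed
  then obtain M where "Q M" "x \<in> Poly_Mapping.keys (r (Poly_Mapping.single (h M) 1) * Poly_Mapping.single (h M) 1)"
    using F(1) by blast
  then obtain b c where "Q M" "c \<in> Poly_Mapping.keys (Poly_Mapping.single (h M) (1::'k))" "x = b + c"
    using keys_mult by blast
  thus ?thesis by auto
qed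

lemma monomial_ideal_memI:
  assumes f: "f \<in> polys_in V"
    and dvd: "\<And>x. x \<in> Poly_Mapping.keys f \<Longrightarrow> \<exists>M d. Q M \<and> x = d + h M"
  shows "f \<in> ideal_gen_in V {Poly_Mapping.single (h M) (1::'k::field) | M. Q M}"
proof -
  have "Poly_Mapping.single x (Poly_Mapping.lookup f x)
      \<in> ideal_gen_in V {Poly_Mapping.single (h M) (1::'k::field) | M. Q M}"
    if x: "x \<in> Poly_Mapping.keys f" for x
  proof -
    obtain M d where M: "Q M" "x = d + h M" using dvd x by blast
    have "Poly_Mapping.keys d \<subseteq> V"
      using f x M(2) keys_add_nat[of d "h M"] unfolding polys_in_def by blast
    hence "Poly_Mapping.single d (Poly_Mapping.lookup f x) \<in> polys_in V" by (rule polys_in_single)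
    moreover have "Poly_Mapping.single x (Poly_Mapping.lookup f x)
        = Poly_Mapping.single d (Poly_Mapping.lookup f x) * Poly_Mapping.single (h M) 1"
      using M(2) by (simp add: mult_single)
    ultimately show ?thesis using M(1) by (auto intro!: ideal_gen_in_multiple)
  qed
  hence "(\<Sum>x\<in>Poly_Mapping.keys f. Poly_Mapping.single x (Poly_Mapping.lookup f x))
      \<in> ideal_gen_in V {Poly_Mapping.single (h M) (1::'k::field) | M. Q M}"
    by (rule ideal_gen_in_sum)
  thus ?thesis by (simp flip: poly_mapping_sum_single_lookup)
qed

lemma mem_monomial_ideal_iff:
  assumes "f \<in> polys_in V"
  shows "f \<in> ideal_gen_in V {Poly_Mapping.single (h M) (1::'k::field) | M. Q M}
    \<longleftrightarrow> (\<forall>x\<in>Poly_Mapping.keys f. \<exists>M d. Q M \<and> x = d + h M)"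
proof
  show "\<forall>x\<in>Poly_Mapping.keys f. \<exists>M d. Q M \<and> x = d + h M"
    if "f \<in> ideal_gen_in V {Poly_Mapping.single (h M) (1::'k::field) | M. Q M}"
    using monomial_ideal_keys_dvd[OF that] by blast
qed (rule monomial_ideal_memI[OF assms], blast)

section \<open>Squarefree powers of the edge ideal\<close>

definition sqfree_monomial :: "'v set \<Rightarrow> 'v \<Rightarrow>\<^sub>0 nat" where
  "sqfree_monomial U = (\<Sum>v\<in>U. Poly_Mapping.single v 1)"

lemma lookup_sqfree_monomial:
  "finite U \<Longrightarrow> Poly_Mapping.lookup (sqfree_monomial U) w = (if w \<in> U then 1 else 0)"
  unfolding sqfree_monomial_def by (simp add: lookup_sum lookup_single when_def)

lemma keys_sqfree_monomial: "finite U \<Longrightarrow> Poly_Mapping.keys (sqfree_monomial U) = U"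
  by (auto simp: in_keys_iff lookup_sqfree_monomial split: if_splits)

lemma sqfree_monomial_dvd_iff:
  assumes "finite U"
  shows "(\<exists>d. x = d + sqfree_monomial U) \<longleftrightarrow> U \<subseteq> Poly_Mapping.keys x"
proof
  assume "U \<subseteq> Poly_Mapping.keys x"
  hence "x = (x - sqfree_monomial U) + sqfree_monomial U"
    using assms by (intro poly_mapping_eqI) (auto simp: lookup_add lookup_minus lookup_sqfree_monomial in_keys_iff)
  thus "\<exists>d. x = d + sqfree_monomial U" ..
qed (use assms in \<open>auto simp: keys_add_nat keys_sqfree_monomial\<close>)

lemma prod_Var_eq_sqfree_monomial:
  "finite U \<Longrightarrow> (\<Prod>v\<in>U. Var v :: ('v \<Rightarrow>\<^sub>0 nat) \<Rightarrow>\<^sub>0 'k::field) = Poly_Mapping.single (sqfree_monomial U) 1"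
  by (induction U rule: finite_induct) (simp_all add: sqfree_monomial_def Var_def mult_single)

lemma prod_edge_mono_matching:
  assumes sg: "simple_graph V E" and M: "matching E M"
  shows "(\<Prod>e\<in>M. edge_mono e :: ('v \<Rightarrow>\<^sub>0 nat) \<Rightarrow>\<^sub>0 'k::field)
    = Poly_Mapping.single (sqfree_monomial (\<Union>M)) 1"
proof -
  have "\<forall>e\<in>M. finite e" using M simple_graph_edgeD[OF sg] unfolding matching_def by blast
  moreover have "\<forall>A\<in>M. \<forall>B\<in>M. A \<noteq> B \<longrightarrow> A \<inter> B = {}" using M unfolding matching_def by blast
  ultimately have "(\<Prod>e\<in>M. edge_mono e :: ('v \<Rightarrow>\<^sub>0 nat) \<Rightarrow>\<^sub>0 'k) = (\<Prod>v\<in>\<Union>M. Var v)"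
    unfolding edge_mono_def by (simp add: prod.Union_disjoint)
  also have "\<dots> = Poly_Mapping.single (sqfree_monomial (\<Union>M)) 1"
    using matching_vertices[OF sg M] by (simp add: prod_Var_eq_sqfree_monomial)
  finally show ?thesis .
qed

lemma sq_power_eq_monomial_ideal:
  assumes "simple_graph V E"
  shows "(sq_power V E j :: (('v \<Rightarrow>\<^sub>0 nat) \<Rightarrow>\<^sub>0 'k::field) set)
    = ideal_gen_in V {Poly_Mapping.single (sqfree_monomial (\<Union>M)) 1 | M. matching E M \<and> card M = j}"
  unfolding sq_power_def using prod_edge_mono_matching[OF assms] by metis

lemma sq_power_subset_polys_in:
  assumes sg: "simple_graph V E"
  shows "(sq_power V E j :: (('v \<Rightarrow>\<^sub>0 nat) \<Rightarrow>\<^sub>0 'k::field) set) \<subseteq> polys_in V"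
  unfolding sq_power_eq_monomial_ideal[OF sg]
proof (rule ideal_gen_in_subset_polys_in, clarify)
  fix M assume "matching E M"
  thus "Poly_Mapping.single (sqfree_monomial (\<Union>M)) (1::'k) \<in> polys_in V"
    using matching_vertices[OF sg] by (simp add: polys_in_single keys_sqfree_monomial)
qed

lemma mem_sq_power_iff:
  assumes sg: "simple_graph V E" and f: "f \<in> polys_in V"
  shows "f \<in> sq_power V E j \<longleftrightarrow> (\<forall>x\<in>Poly_Mapping.keys f. supports_matching E j (Poly_Mapping.keys x))"
  unfolding sq_power_eq_monomial_ideal[OF sg] mem_monomial_ideal_iff[OF f] supports_matching_def
  using sqfree_monomial_dvd_iff matching_vertices[OF sg] by metis

lemma colon_sq_power_supports_matching:
  fixes f :: "('v \<Rightarrow>\<^sub>0 nat) \<Rightarrow>\<^sub>0 'k::field"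
  assumes sg: "simple_graph V E"
    and f: "f \<in> colon_in V (sq_power V E k) (sq_power V E j)" and x: "x \<in> Poly_Mapping.keys f"
    and M: "matching E M" "card M = j"
  shows "supports_matching E k (Poly_Mapping.keys x \<union> \<Union>M)"
proof -
  define g where "g = Poly_Mapping.single (sqfree_monomial (\<Union>M)) (1::'k)"
  have "1 * g \<in> sq_power V E j"
    unfolding g_def sq_power_eq_monomial_ideal[OF sg] using M
    by (intro ideal_gen_in_multiple polys_in_one) blast
  hence fg: "f * g \<in> sq_power V E k" using f unfolding colon_in_def by simp
  moreover have "f * g \<in> polys_in V" using fg sq_power_subset_polys_in[OF sg] by blast
  moreover have "x + sqfree_monomial (\<Union>M) \<in> Poly_Mapping.keys (f * g)"
    using x unfolding g_def by (simp add: in_keys_iff lookup_mult_single_one)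
  ultimately have "supports_matching E k (Poly_Mapping.keys (x + sqfree_monomial (\<Union>M)))"
    using mem_sq_power_iff[OF sg] by blast
  thus ?thesis using matching_vertices[OF sg M(1)] by (simp add: keys_add_nat keys_sqfree_monomial)
qed

theorem theorem6p5:
  fixes V :: "'v set" and E :: "'v set set" and k :: nat
  assumes "simple_graph V E"
    and "equimatchable E"
    and "1 < k" and "k \<le> matching_number E"
  shows "colon_in V (sq_power V E k :: (('v \<Rightarrow>\<^sub>0 nat) \<Rightarrow>\<^sub>0 'k::field) set) (sq_power V E (k - 1))
         = sq_power V E k"
proof -
  note sg = assms(1)
  let ?I = "sq_power V E :: nat \<Rightarrow> (('v \<Rightarrow>\<^sub>0 nat) \<Rightarrow>\<^sub>0 'k) set"
  have "colon_in V (?I k) (?I (k - 1)) \<subseteq> ?I k"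
  proof
    fix f assume f: "f \<in> colon_in V (?I k) (?I (k - 1))"
    have "supports_matching E k (Poly_Mapping.keys x)" if x: "x \<in> Poly_Mapping.keys f" for x
    proof (rule ccontr)
      assume "\<not> supports_matching E k (Poly_Mapping.keys x)"
      then obtain M where "matching E M" "card M = k - 1"
        and "\<not> supports_matching E k (Poly_Mapping.keys x \<union> \<Union>M)"
        using equimatchable_ex_matching_preserving_unsupported[OF sg assms(2,4)] by blast
      thus False using colon_sq_power_supports_matching[OF sg f x] by blast
    qed
    moreover have "f \<in> polys_in V" using f unfolding colon_in_def by blast
    ultimately show "f \<in> ?I k" using mem_sq_power_iff[OF sg] by blast
  qed
  moreover have "?I k \<subseteq> colon_in V (?I k) (?I (k - 1))"
  proof
    fix f assume f: "f \<in> ?I k"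
    have "f * g \<in> ?I k" if "g \<in> ?I (k - 1)" for g
      using f that sq_power_subset_polys_in[OF sg] unfolding sq_power_def by (blast intro: ideal_gen_in_mult)
    thus "f \<in> colon_in V (?I k) (?I (k - 1))"
      using f sq_power_subset_polys_in[OF sg] unfolding colon_in_def by blast
  qed
  ultimately show ?thesis by (rule subset_antisym)
qed

end
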